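(* Let $\mu\in\mathcal{L}$. If $\mu$ has an atom at $x\in\mathbb{R}$, then $W(\mu)$ has an atom at $e^{-ix}$ with $W(\mu)(\{e^{-ix}\})=\mu(\{x\})$. Conversely, if $e^{-ix}$ is an atom of $W(\mu)$, then there is a unique $n\in\mathbb{Z}$ such that $\mu$ has an atom at $x+2\pi n$, and $\mu(\{x+2\pi n\})=W(\mu)(\{e^{-ix}\})$.
   Context: For a probability measure $\mu$ on $\mathbb{R}$, $G_\mu(z)=\int\frac{d\mu(x)}{z-x}$ and $F_\mu=1/G_\mu$ on the upper half-plane $\mathbb{C}^+$. $\mathcal{L}$ is the set of probability measures $\mu$ on $\mathbb{R}$ with $F_\mu(z+2\pi)=F_\mu(z)+2\pi$ for all $z\in\mathbb{C}^+$. $W(\mu)$ is the probability measure on the unit circle obtained as the push-forward of $\mu$ under $x\mapsto e^{-ix}$. *)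

theory Defs
  imports "HOL-Probability.Probability"
begin

definition real_prob_measure :: "real measure \<Rightarrow> bool" where
  "real_prob_measure \<mu> \<longleftrightarrow> prob_space \<mu> \<and> sets \<mu> = sets borel"

definition cauchy_G :: "real measure \<Rightarrow> complex \<Rightarrow> complex" where
  "cauchy_G \<mu> z = (\<integral>x. 1 / (z - complex_of_real x) \<partial>\<mu>)"

definition cauchy_F :: "real measure \<Rightarrow> complex \<Rightarrow> complex" where
  "cauchy_F \<mu> z = 1 / cauchy_G \<mu> z"

definition classL :: "real measure set" where
  "classL = {\<mu>. real_prob_measure \<mu> \<and>
     (\<forall>z. Im z > 0 \<longrightarrow> cauchy_F \<mu> (z + complex_of_real (2*pi)) = cauchy_F \<mu> z + complex_of_real (2*pi))}"

text \<open>Wrapping: push-forward under x \<mapsto> exp(-ix), a measure on the complex plane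
  (concentrated on the unit circle).\<close>
definition wrap :: "real measure \<Rightarrow> complex measure" where
  "wrap \<mu> = distr \<mu> borel (\<lambda>x. cis (- x))"

end

theory Submission
  imports Defs
begin

text \<open>Approaching a point \<open>a\<close> vertically, \<open>iy G(a + iy) \<rightarrow> \<mu>{a}\<close> by dominated
  convergence, so \<open>F\<close> tends to \<open>0\<close> at every atom. For \<open>\<mu> \<in> L\<close>, \<open>F\<close> commutes with
  translation by \<open>2\<pi>n\<close>; if \<open>a\<close> and \<open>a + 2\<pi>n\<close> were both atoms, \<open>F\<close> near \<open>a + 2\<pi>n\<close> would
  tend both to \<open>0\<close> and to \<open>2\<pi>n\<close>, forcing \<open>n = 0\<close>. The mass of \<open>W(\<mu>)\<close> at \<open>cis (- x)\<close> is the
  \<open>\<mu>\<close>-mass of the countable orbit \<open>x + 2\<pi>\<int>\<close>, which therefore carries at most one atom.\<close>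

lemma classL_cauchy_F_shift_int:
  assumes "\<mu> \<in> classL" "Im z > 0"
  shows "cauchy_F \<mu> (z + of_real (2 * pi * of_int n)) = cauchy_F \<mu> z + of_real (2 * pi * of_int n)"
proof -
  have shift: "cauchy_F \<mu> (w + of_real (2 * pi)) = cauchy_F \<mu> w + of_real (2 * pi)" if "Im w > 0" for w
    using assms(1) that unfolding classL_def by blast
  have "\<forall>z. Im z > 0 \<longrightarrow>
          cauchy_F \<mu> (z + of_real (2 * pi * of_int n)) = cauchy_F \<mu> z + of_real (2 * pi * of_int n)"
  proof (induction n rule: int_induct[where k = 0])
    case base
    show ?case by simp
  next
    case (step1 i)
    show ?case
    proof (intro allI impI)
      fix z :: complex assume "Im z > 0"
      have "cauchy_F \<mu> (z + of_real (2 * pi * of_int (i + 1)))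
          = cauchy_F \<mu> ((z + of_real (2 * pi * of_int i)) + of_real (2 * pi))"
        by (simp add: algebra_simps)
      also have "\<dots> = cauchy_F \<mu> z + of_real (2 * pi * of_int i) + of_real (2 * pi)"
        using shift step1.IH \<open>Im z > 0\<close> by simp
      finally show "cauchy_F \<mu> (z + of_real (2 * pi * of_int (i + 1))) = cauchy_F \<mu> z + of_real (2 * pi * of_int (i + 1))"
        by (simp add: algebra_simps)
    qed
  next
    case (step2 i)
    show ?case
    proof (intro allI impI)
      fix z :: complex assume "Im z > 0"
      define w where "w = z + of_real (2 * pi * of_int (i - 1))"
      have "cauchy_F \<mu> w + of_real (2 * pi) = cauchy_F \<mu> (z + of_real (2 * pi * of_int i))"
        using shift[of w] \<open>Im z > 0\<close> by (simp add: w_def algebra_simps)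
      also have "\<dots> = cauchy_F \<mu> z + of_real (2 * pi * of_int i)"
        using step2.IH \<open>Im z > 0\<close> by simp
      finally show "cauchy_F \<mu> w = cauchy_F \<mu> z + of_real (2 * pi * of_int (i - 1))"
        by (simp add: algebra_simps)
    qed
  qed
  then show ?thesis using assms(2) by blast
qed

lemma norm_Im_div_le_1:
  fixes w :: complex
  assumes "Im w \<noteq> 0"
  shows "norm (\<i> * of_real (Im w) / w) \<le> 1"
  using assms abs_Im_le_cmod[of w] by (simp add: norm_mult norm_divide divide_le_eq_1)

lemma cauchy_G_tendsto_atom:
  assumes "real_prob_measure \<mu>" "y \<longlonglongrightarrow> 0" "\<And>m. y m > 0"
  shows "(\<lambda>m. \<i> * of_real (y m) * cauchy_G \<mu> (of_real a + \<i> * of_real (y m)))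
          \<longlonglongrightarrow> of_real (measure \<mu> {a})"
proof -
  interpret prob_space \<mu> using assms(1) unfolding real_prob_measure_def by auto
  have sets: "sets \<mu> = sets borel" using assms(1) unfolding real_prob_measure_def by auto
  have borel_meas: "f \<in> borel_measurable \<mu>" if "f \<in> borel_measurable borel" for f :: "real \<Rightarrow> complex"
    using that measurable_cong_sets[OF sets refl] by blast
  define s where "s m x = \<i> * of_real (y m) / (of_real (a - x) + \<i> * of_real (y m))" for m x
  have "(\<lambda>m. integral\<^sup>L \<mu> (s m)) \<longlonglongrightarrow> integral\<^sup>L \<mu> (\<lambda>x. of_real (indicator {a} x) :: complex)"
  proof (rule integral_dominated_convergence[where w = "\<lambda>_. 1"])
    show "(\<lambda>x. of_real (indicator {a} x) :: complex) \<in> borel_measurable \<mu>"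
      by (rule borel_meas) measurable
    show "s m \<in> borel_measurable \<mu>" for m
      unfolding s_def by (rule borel_meas) measurable
    show "AE x in \<mu>. (\<lambda>m. s m x) \<longlonglongrightarrow> of_real (indicator {a} x)"
    proof (rule AE_I2)
      fix x
      show "(\<lambda>m. s m x) \<longlonglongrightarrow> of_real (indicator {a} x)"
      proof (cases "x = a")
        case True
        then show ?thesis using assms(3) by (simp add: s_def less_imp_neq[symmetric])
      next
        case False
        have "(\<lambda>m. s m x) \<longlonglongrightarrow> \<i> * of_real 0 / (of_real (a - x) + \<i> * of_real 0)"
          unfolding s_def using False
          by (intro tendsto_intros assms(2)) simp
        then show ?thesis using False by simp
      qed
    qed
    show "AE x in \<mu>. norm (s m x) \<le> 1" for m
      using norm_Im_div_le_1[of "of_real (a - x) + \<i> * of_real (y m)" for x] assms(3)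
      by (intro AE_I2) (simp add: s_def less_imp_neq[symmetric])
  qed simp
  moreover have "\<i> * of_real (y m) * cauchy_G \<mu> (of_real a + \<i> * of_real (y m)) = integral\<^sup>L \<mu> (s m)" for m
  proof -
    have "s m = (\<lambda>x. \<i> * of_real (y m) * (1 / (of_real a + \<i> * of_real (y m) - of_real x)))"
      by (simp add: s_def fun_eq_iff algebra_simps)
    then show ?thesis unfolding cauchy_G_def by (simp only: integral_mult_right_zero)
  qed
  moreover have "space \<mu> = UNIV" using sets_eq_imp_space_eq[OF sets] by simp
  ultimately show ?thesis by simp
qed

lemma cauchy_F_tendsto_0_at_atom:
  assumes "real_prob_measure \<mu>" "measure \<mu> {a} > 0" "y \<longlonglongrightarrow> 0" "\<And>m. y m > 0"
  shows "(\<lambda>m. cauchy_F \<mu> (of_real a + \<i> * of_real (y m))) \<longlonglongrightarrow> 0"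
proof -
  define c where "c m = \<i> * of_real (y m)" for m
  define g where "g m = c m * cauchy_G \<mu> (of_real a + c m)" for m
  have "g \<longlonglongrightarrow> of_real (measure \<mu> {a})"
    using cauchy_G_tendsto_atom[OF assms(1,3,4)] unfolding g_def c_def .
  moreover have "c \<longlonglongrightarrow> 0"
    using tendsto_mult_right[OF tendsto_of_real[OF assms(3)], of \<i>] unfolding c_def by simp
  ultimately have "(\<lambda>m. c m / g m) \<longlonglongrightarrow> 0 / of_real (measure \<mu> {a})"
    using assms(2) by (intro tendsto_divide) simp_all
  moreover have "cauchy_F \<mu> (of_real a + \<i> * of_real (y m)) = c m / g m" for m
    using assms(4)[of m] by (simp add: cauchy_F_def g_def c_def)
  ultimately show ?thesis by simp
qed

lemma classL_congruent_atoms: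
  assumes "\<mu> \<in> classL" "measure \<mu> {x + 2 * pi * of_int m} > 0" "measure \<mu> {x + 2 * pi * of_int n} > 0"
  shows "m = n"
proof -
  have prob: "real_prob_measure \<mu>" using assms(1) unfolding classL_def by blast
  define y :: "nat \<Rightarrow> real" where "y k = inverse (Suc k)" for k
  have y: "y \<longlonglongrightarrow> 0" "\<And>k. y k > 0"
    unfolding y_def using LIMSEQ_inverse_real_of_nat by simp_all
  define z where "z k = of_real (x + 2 * pi * of_int m) + \<i> * of_real (y k)" for k
  have shifted: "of_real (x + 2 * pi * of_int n) + \<i> * of_real (y k) = z k + of_real (2 * pi * of_int (n - m))" for k
    by (simp add: z_def algebra_simps)
  have "cauchy_F \<mu> (of_real (x + 2 * pi * of_int n) + \<i> * of_real (y k)) - cauchy_F \<mu> (z k)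
      = of_real (2 * pi * of_int (n - m))" for k
    unfolding shifted using classL_cauchy_F_shift_int[OF assms(1), of "z k" "n - m"] y(2)[of k]
    by (simp add: z_def)
  moreover have "(\<lambda>k. cauchy_F \<mu> (of_real (x + 2 * pi * of_int n) + \<i> * of_real (y k)) - cauchy_F \<mu> (z k))
      \<longlonglongrightarrow> 0 - 0"
    unfolding z_def using assms(2,3) by (intro tendsto_diff cauchy_F_tendsto_0_at_atom[OF prob _ y])
  ultimately have "(\<lambda>k. of_real (2 * pi * of_int (n - m)) :: complex) \<longlonglongrightarrow> 0 - 0"
    by (simp only:)
  then have "of_real (2 * pi * of_int (n - m)) = (0 - 0 :: complex)"
    by (simp only: LIMSEQ_const_iff)
  then show ?thesis by simp
qed

lemma cis_minus_eq_iff: "cis (- t) = cis (- x) \<longleftrightarrow> (\<exists>n::int. t = x + 2 * pi * of_int n)"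
  using sin_cos_eq_iff[of t x] by (simp add: complex_eq_iff conj_commute)

lemma measure_wrap_singleton:
  assumes "sets \<mu> = sets borel"
  shows "measure (wrap \<mu>) {cis (- x)} = measure \<mu> (range (\<lambda>n::int. x + 2 * pi * of_int n))"
proof -
  have "(\<lambda>t::real. cis (- t)) \<in> borel_measurable borel"
    by (intro borel_measurable_continuous_onI continuous_intros)
  then have "(\<lambda>t. cis (- t)) \<in> measurable \<mu> borel"
    by (simp add: measurable_cong_sets[OF assms refl])
  moreover have "(\<lambda>t. cis (- t)) -` {cis (- x)} \<inter> space \<mu> = range (\<lambda>n::int. x + 2 * pi * of_int n)"
    using sets_eq_imp_space_eq[OF assms] cis_minus_eq_iff[of _ x] by auto
  ultimately show ?thesis unfolding wrap_def by (simp add: measure_distr)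
qed

lemma measure_countable_null_singletons:
  assumes "countable S" "\<And>t. t \<in> S \<Longrightarrow> {t} \<in> null_sets M"
  shows "measure M S = 0"
  using null_sets_UN'[of S "\<lambda>t. {t}"] assms by (simp add: measure_eq_0_null_sets)

lemma measure_countable_single_atom:
  assumes "countable S" "a \<in> S" "{a} \<in> sets M" "\<And>t. t \<in> S - {a} \<Longrightarrow> {t} \<in> null_sets M"
  shows "measure M S = measure M {a}"
proof -
  have "S - {a} \<in> null_sets M"
    using null_sets_UN'[of "S - {a}" "\<lambda>t. {t}"] assms(1,4) by simp
  then have "measure M ({a} \<union> (S - {a})) = measure M {a}"
    using assms(3) by (rule measure_Un_null_set[rotated])
  moreover have "{a} \<union> (S - {a}) = S" using assms(2) by blast
  ultimately show ?thesis by simp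
qed

lemma real_prob_measure_singleton_null:
  assumes "real_prob_measure \<mu>" "\<not> measure \<mu> {t} > 0"
  shows "{t} \<in> null_sets \<mu>"
proof -
  interpret prob_space \<mu> using assms(1) unfolding real_prob_measure_def by auto
  have "{t} \<in> sets \<mu>" using assms(1) unfolding real_prob_measure_def by simp
  moreover have "measure \<mu> {t} = 0" using assms(2) measure_nonneg[of \<mu> "{t}"] by linarith
  ultimately show ?thesis by (auto simp: emeasure_eq_measure)
qed

lemma measure_wrap_singleton_pos_imp_atom:
  assumes "real_prob_measure \<mu>" "measure (wrap \<mu>) {cis (- x)} > 0"
  shows "\<exists>n::int. measure \<mu> {x + 2 * pi * of_int n} > 0"
proof (rule ccontr)
  assume "\<nexists>n::int. measure \<mu> {x + 2 * pi * of_int n} > 0"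
  then have "measure \<mu> (range (\<lambda>n::int. x + 2 * pi * of_int n)) = 0"
    using real_prob_measure_singleton_null[OF assms(1)]
    by (intro measure_countable_null_singletons) auto
  then show False
    using assms measure_wrap_singleton[of \<mu> x] unfolding real_prob_measure_def by simp
qed

lemma classL_measure_wrap_singleton:
  assumes "\<mu> \<in> classL" "measure \<mu> {x + 2 * pi * of_int n} > 0"
  shows "measure (wrap \<mu>) {cis (- x)} = measure \<mu> {x + 2 * pi * of_int n}"
proof -
  have prob: "real_prob_measure \<mu>" using assms(1) unfolding classL_def by blast
  then have "sets \<mu> = sets borel" unfolding real_prob_measure_def by simp
  moreover have "{t} \<in> null_sets \<mu>"
    if "t \<in> range (\<lambda>k::int. x + 2 * pi * of_int k) - {x + 2 * pi * of_int n}" for t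
    using that classL_congruent_atoms[OF assms] real_prob_measure_singleton_null[OF prob] by auto
  ultimately show ?thesis
    unfolding measure_wrap_singleton[OF \<open>sets \<mu> = sets borel\<close>]
    by (intro measure_countable_single_atom) auto
qed

theorem proposition4p12:
  fixes \<mu> :: "real measure"
  assumes "\<mu> \<in> classL"
  shows "(\<forall>x::real. measure \<mu> {x} > 0 \<longrightarrow>
            measure (wrap \<mu>) {cis (- x)} > 0 \<and> measure (wrap \<mu>) {cis (- x)} = measure \<mu> {x})
       \<and> (\<forall>x::real. measure (wrap \<mu>) {cis (- x)} > 0 \<longrightarrow>
            (\<exists>!n::int. measure \<mu> {x + 2 * pi * of_int n} > 0) \<and>
            (\<forall>n::int. measure \<mu> {x + 2 * pi * of_int n} > 0 \<longrightarrow>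
               measure \<mu> {x + 2 * pi * of_int n} = measure (wrap \<mu>) {cis (- x)}))"
proof (intro conjI allI impI)
  fix x assume "measure \<mu> {x} > 0"
  then show "measure (wrap \<mu>) {cis (- x)} = measure \<mu> {x}"
    using classL_measure_wrap_singleton[OF assms, of x 0] by simp
  with \<open>measure \<mu> {x} > 0\<close> show "measure (wrap \<mu>) {cis (- x)} > 0" by simp
next
  fix x assume "measure (wrap \<mu>) {cis (- x)} > 0"
  moreover have "real_prob_measure \<mu>" using assms unfolding classL_def by blast
  ultimately show "\<exists>!n::int. measure \<mu> {x + 2 * pi * of_int n} > 0"
    using measure_wrap_singleton_pos_imp_atom classL_congruent_atoms[OF assms] by blast
next
  fix x n assume "measure \<mu> {x + 2 * pi * of_int n} > 0"
  then show "measure \<mu> {x + 2 * pi * of_int n} = measure (wrap \<mu>) {cis (- x)}"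
    using classL_measure_wrap_singleton[OF assms] by simp
qed

end
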